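(* With notation as in the context (type $E_6$ over $\mathbb{Z}/3$), $\Gamma_6^+=\{(x_1,\dots,x_5)\in V: \prod_{i=1}^5x_i=1\}$, i.e. $\Gamma_6^+$ is the set of vectors with all coordinates nonzero and an even number of coordinates equal to $2$.
   Context: Let $V=(\mathbb{Z}/3)^5$ with the standard symmetric form $\sum_i x_iy_i$. Let $\Delta$ be the root system of type $E_6$ with simple roots $\alpha_1,\dots,\alpha_6$, $\langle\alpha_i,\alpha_i\rangle=2$, $\langle\alpha_i,\alpha_j\rangle=-1$ if $\{i,j\}\in\{\{1,3\},\{3,4\},\{4,5\},\{5,6\},\{2,4\}\}$, $0$ otherwise; $\Lambda=\bigoplus\mathbb{Z}\alpha_i$. Let $f:\Lambda\to V$ be the group homomorphism with $f(\alpha_1)=(1,2,0,0,0)$, $f(\alpha_2)=(0,0,0,1,2)$, $f(\alpha_3)=(0,1,2,0,0)$, $f(\alpha_4)=(0,0,1,2,0)$, $f(\alpha_5)=(0,0,0,1,1)$, $f(\alpha_6)=(1,1,1,1,1)$. Let $\Delta_6^+$ be the positive roots $\beta=\sum\beta^i\alpha_i$ with $\beta^6\ne0$, and $\Gamma_6^+=f(\Delta_6^+)$. *)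

theory Defs
  imports Main "HOL-Library.Numeral_Type"
begin

text \<open>V = (Z/3)^5 is represented by functions nat => 3 supported on indices 1..5.
  The root lattice Lambda = direct sum of Z alpha_i is represented by coefficient
  functions nat => int supported on indices 1..6 (beta i = coefficient of alpha_i).\<close>

definition V5 :: "(nat \<Rightarrow> 3) set" where
  "V5 = {x. \<forall>i. i \<notin> {1..5} \<longrightarrow> x i = 0}"

definition LambdaE6 :: "(nat \<Rightarrow> int) set" where
  "LambdaE6 = {b. \<forall>i. i \<notin> {1..6} \<longrightarrow> b i = 0}"

definition gramE6 :: "nat \<Rightarrow> nat \<Rightarrow> int" where
  "gramE6 i j = (if i = j then 2
     else if {i, j} \<in> {{1,3},{3,4},{4,5},{5,6},{2,4}} then -1 else 0)"

definition formE6 :: "(nat \<Rightarrow> int) \<Rightarrow> (nat \<Rightarrow> int) \<Rightarrow> int" where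
  "formE6 b c = (\<Sum>i\<in>{1..6}. \<Sum>j\<in>{1..6}. b i * c j * gramE6 i j)"

text \<open>The roots of the simply-laced root system E6 are exactly the lattice vectors of
  norm 2; the positive roots are those with nonnegative coefficients.\<close>
definition rootsE6 :: "(nat \<Rightarrow> int) set" where
  "rootsE6 = {b \<in> LambdaE6. formE6 b b = 2}"

definition pos_rootsE6 :: "(nat \<Rightarrow> int) set" where
  "pos_rootsE6 = {b \<in> rootsE6. \<forall>i. b i \<ge> 0}"

definition Delta6_pos :: "(nat \<Rightarrow> int) set" where
  "Delta6_pos = {b \<in> pos_rootsE6. b 6 \<noteq> 0}"

definition vec5 :: "int list \<Rightarrow> nat \<Rightarrow> 3" where
  "vec5 xs = (\<lambda>i. if i \<in> {1..5} then of_int (xs ! (i - 1)) else 0)"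

definition f_alpha :: "nat \<Rightarrow> nat \<Rightarrow> 3" where
  "f_alpha i = (if i = 1 then vec5 [1,2,0,0,0]
     else if i = 2 then vec5 [0,0,0,1,2]
     else if i = 3 then vec5 [0,1,2,0,0]
     else if i = 4 then vec5 [0,0,1,2,0]
     else if i = 5 then vec5 [0,0,0,1,1]
     else if i = 6 then vec5 [1,1,1,1,1]
     else (\<lambda>_. 0))"

definition fE6 :: "(nat \<Rightarrow> int) \<Rightarrow> nat \<Rightarrow> 3" where
  "fE6 b = (\<lambda>k. \<Sum>i\<in>{1..6}. of_int (b i) * f_alpha i k)"

definition Gamma6_pos :: "(nat \<Rightarrow> 3) set" where
  "Gamma6_pos = fE6 ` Delta6_pos"

end

theory Submission imports Defs begin

text \<open>Completing squares in the positive definite \<open>E\<^sub>6\<close> form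
  bounds each coefficient by the corresponding coefficient of the highest root \<open>(1,2,2,3,2,1)\<close>,
  leaving a finite search with 16 solutions. Their images under \<open>f\<close> are exactly the 16 vectors
  whose coordinate product is 1. Finally \<open>2 = -1\<close> in \<open>\<int>/3\<close>, so a product of nonzero
  coordinates is \<open>(-1)\<close> to the number of coordinates equal to 2.\<close>

lemma Z3_cases: "(x::3) = 0 \<or> x = 1 \<or> x = 2"
proof (cases x)
  case (of_int z)
  then have "z = 0 \<or> z = 1 \<or> z = 2" by auto
  then show ?thesis using of_int by auto
qed

lemma prod_Z3_eq_one_iff:
  fixes x :: "'a \<Rightarrow> 3"
  assumes "finite I"
  shows "(\<Prod>i\<in>I. x i) = 1 \<longleftrightarrow> (\<forall>i\<in>I. x i \<noteq> 0) \<and> even (card {i\<in>I. x i = 2})"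
proof (cases "\<forall>i\<in>I. x i \<noteq> 0")
  case False
  then have "(\<Prod>i\<in>I. x i) = 0" using assms by (auto intro: prod_zero)
  with False show ?thesis by simp
next
  case True
  let ?T = "{i\<in>I. x i = 2}"
  have "(\<Prod>i\<in>I - ?T. x i) = 1"
    using True Z3_cases by (intro prod.neutral) blast
  moreover have "(\<Prod>i\<in>?T. x i) = (\<Prod>i\<in>?T. - 1)"
    by (rule prod.cong) simp_all
  moreover have "(\<Prod>i\<in>I. x i) = (\<Prod>i\<in>I - ?T. x i) * (\<Prod>i\<in>?T. x i)"
    using assms by (intro prod.subset_diff) auto
  ultimately have "(\<Prod>i\<in>I. x i) = (- 1) ^ card ?T"
    by simp
  then show ?thesis
    using True by (cases "even (card ?T)") simp_all
qed

lemma of_int_mod_Z3: "(of_int (z mod 3) :: 3) = of_int z"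
  unfolding bit1.of_int_eq by simp

(* The guard keeps this rule terminating when used by simp: without it, 2 would rewrite to itself. *)
lemma numeral_Z3_eq_mod:
  "3 \<le> (numeral w :: int) \<Longrightarrow> (numeral w :: 3) = of_int (numeral w mod 3)"
  by (simp only: of_int_mod_Z3 of_int_numeral)

lemma int_le_of_square_bound:
  fixes x m k C :: int
  assumes "k * x\<^sup>2 \<le> C" "C < k * (m + 1)\<^sup>2" "0 < k" "0 \<le> m + 1"
  shows "x \<le> m"
proof -
  have "x\<^sup>2 < (m + 1)\<^sup>2"
    using assms(1-3) by (smt (verit) mult_left_mono)
  then show ?thesis
    using assms(4) power2_less_imp_less by fastforce
qed

definition normE6 :: "int \<Rightarrow> int \<Rightarrow> int \<Rightarrow> int \<Rightarrow> int \<Rightarrow> int \<Rightarrow> int" where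
  "normE6 a1 a2 a3 a4 a5 a6 = 2 * (a1\<^sup>2 + a2\<^sup>2 + a3\<^sup>2 + a4\<^sup>2 + a5\<^sup>2 + a6\<^sup>2)
     - 2 * (a1 * a3 + a3 * a4 + a4 * a5 + a5 * a6 + a2 * a4)"

lemma formE6_self: "formE6 b b = normE6 (b 1) (b 2) (b 3) (b 4) (b 5) (b 6)"
proof -
  have "{1..6::nat} = {1, 2, 3, 4, 5, 6}" by auto
  then show ?thesis
    unfolding formE6_def normE6_def
    by (simp add: gramE6_def doubleton_eq_iff algebra_simps power2_eq_square)
qed

lemma normE6_coeff_bounds:
  fixes a1 a2 a3 a4 a5 a6 :: int
  assumes "normE6 a1 a2 a3 a4 a5 a6 = 2"
  shows "a1 \<le> 1" "a2 \<le> 2" "a3 \<le> 2" "a4 \<le> 3" "a5 \<le> 2" "a6 \<le> 1"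
proof -
  let ?N = "normE6 a1 a2 a3 a4 a5 a6"
  \<comment> \<open>Each identity is an LDL decomposition of the Gram matrix \<open>G\<close> ending with the isolated
    variable \<open>a\<^sub>i\<close>; its last pivot is \<open>det G / det G\<^sub>i > 0\<close>, where \<open>G\<^sub>i\<close> omits row and column \<open>i\<close>.\<close>
  have "4 * ?N = 2 * (2*a2 - a4)\<^sup>2 + 2 * (2*a3 - a4 - a1)\<^sup>2 + (2*a4 - 2*a5 - a1)\<^sup>2
      + (2*a5 - 2*a6 - a1)\<^sup>2 + (2*a6 - a1)\<^sup>2 + 3 * a1\<^sup>2"
    unfolding normE6_def by algebra
  then have "3 * a1\<^sup>2 \<le> 8"
    using assms by (smt (verit) zero_le_power2)
  then show "a1 \<le> 1"
    by (rule int_le_of_square_bound[where m = 1]) simp_all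
  have "60 * ?N = 30 * (2*a1 - a3)\<^sup>2 + 10 * (3*a3 - 2*a4)\<^sup>2 + 5 * (4*a4 - 3*a5 - 3*a2)\<^sup>2
      + 3 * (5*a5 - 4*a6 - 3*a2)\<^sup>2 + 18 * (2*a6 - a2)\<^sup>2 + 30 * a2\<^sup>2"
    unfolding normE6_def by algebra
  then have "30 * a2\<^sup>2 \<le> 120"
    using assms by (smt (verit) zero_le_power2)
  then show "a2 \<le> 2"
    by (rule int_le_of_square_bound[where m = 2]) simp_all
  have "60 * ?N = 30 * (2*a1 - a3)\<^sup>2 + 30 * (2*a2 - a4)\<^sup>2 + 10 * (3*a4 - 2*a5 - 2*a3)\<^sup>2
      + 5 * (4*a5 - 3*a6 - 2*a3)\<^sup>2 + 3 * (5*a6 - 2*a3)\<^sup>2 + 18 * a3\<^sup>2"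
    unfolding normE6_def by algebra
  then have "18 * a3\<^sup>2 \<le> 120"
    using assms by (smt (verit) zero_le_power2)
  then show "a3 \<le> 2"
    by (rule int_le_of_square_bound[where m = 2]) simp_all
  have "6 * ?N = 3 * (2*a1 - a3)\<^sup>2 + 3 * (2*a2 - a4)\<^sup>2 + (3*a3 - 2*a4)\<^sup>2
      + 3 * (2*a5 - a6 - a4)\<^sup>2 + (3*a6 - a4)\<^sup>2 + a4\<^sup>2"
    unfolding normE6_def by algebra
  then have "1 * a4\<^sup>2 \<le> 12"
    using assms by (smt (verit) zero_le_power2)
  then show "a4 \<le> 3"
    by (rule int_le_of_square_bound[where m = 3]) simp_all
  have "30 * ?N = 15 * (2*a1 - a3)\<^sup>2 + 15 * (2*a2 - a4)\<^sup>2 + 5 * (3*a3 - 2*a4)\<^sup>2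
      + (5*a4 - 6*a5)\<^sup>2 + 15 * (2*a6 - a5)\<^sup>2 + 9 * a5\<^sup>2"
    unfolding normE6_def by algebra
  then have "9 * a5\<^sup>2 \<le> 60"
    using assms by (smt (verit) zero_le_power2)
  then show "a5 \<le> 2"
    by (rule int_le_of_square_bound[where m = 2]) simp_all
  have "60 * ?N = 30 * (2*a1 - a3)\<^sup>2 + 30 * (2*a2 - a4)\<^sup>2 + 10 * (3*a3 - 2*a4)\<^sup>2
      + 2 * (5*a4 - 6*a5)\<^sup>2 + 3 * (4*a5 - 5*a6)\<^sup>2 + 45 * a6\<^sup>2"
    unfolding normE6_def by algebra
  then have "45 * a6\<^sup>2 \<le> 120"
    using assms by (smt (verit) zero_le_power2)
  then show "a6 \<le> 1"
    by (rule int_le_of_square_bound[where m = 1]) simp_all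
qed

definition Delta6_pos_coeffs :: "(int \<times> int \<times> int \<times> int \<times> int \<times> int) set" where
  "Delta6_pos_coeffs =
    {(0, 0, 0, 0, 0, 1), (0, 0, 0, 0, 1, 1), (0, 0, 0, 1, 1, 1), (0, 0, 1, 1, 1, 1),
     (0, 1, 0, 1, 1, 1), (0, 1, 1, 1, 1, 1), (0, 1, 1, 2, 1, 1), (0, 1, 1, 2, 2, 1),
     (1, 0, 1, 1, 1, 1), (1, 1, 1, 1, 1, 1), (1, 1, 1, 2, 1, 1), (1, 1, 1, 2, 2, 1),
     (1, 1, 2, 2, 1, 1), (1, 1, 2, 2, 2, 1), (1, 1, 2, 3, 2, 1), (1, 2, 2, 3, 2, 1)}"

lemma mem_Delta6_pos_coeffs_iff:
  "(a1, a2, a3, a4, a5, a6) \<in> Delta6_pos_coeffs \<longleftrightarrow>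
     normE6 a1 a2 a3 a4 a5 a6 = 2 \<and> 0 \<le> a1 \<and> 0 \<le> a2 \<and> 0 \<le> a3 \<and> 0 \<le> a4 \<and> 0 \<le> a5
     \<and> 0 < a6"
proof
  assume "(a1, a2, a3, a4, a5, a6) \<in> Delta6_pos_coeffs"
  then show "normE6 a1 a2 a3 a4 a5 a6 = 2 \<and> 0 \<le> a1 \<and> 0 \<le> a2 \<and> 0 \<le> a3 \<and> 0 \<le> a4
      \<and> 0 \<le> a5 \<and> 0 < a6"
    unfolding Delta6_pos_coeffs_def normE6_def by auto
next
  assume sol: "normE6 a1 a2 a3 a4 a5 a6 = 2 \<and> 0 \<le> a1 \<and> 0 \<le> a2 \<and> 0 \<le> a3 \<and> 0 \<le> a4
      \<and> 0 \<le> a5 \<and> 0 < a6"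
  note bounds = normE6_coeff_bounds[OF sol[THEN conjunct1]]
  have "a1 \<in> {0..1}" "a2 \<in> {0..2}" "a3 \<in> {0..2}" "a4 \<in> {0..3}" "a5 \<in> {0..2}" "a6 = 1"
    using bounds sol by auto
  then have "a1 \<in> {0, 1}" "a2 \<in> {0, 1, 2}" "a3 \<in> {0, 1, 2}" "a4 \<in> {0, 1, 2, 3}"
      "a5 \<in> {0, 1, 2}" "a6 = 1"
    by (auto simp: atLeastAtMost_iff)
  then show "(a1, a2, a3, a4, a5, a6) \<in> Delta6_pos_coeffs"
    using sol unfolding Delta6_pos_coeffs_def normE6_def
    by (simp; elim disjE; simp)
qed

definition of_coeffs6 :: "int \<times> int \<times> int \<times> int \<times> int \<times> int \<Rightarrow> nat \<Rightarrow> int" where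
  "of_coeffs6 = (\<lambda>(a1, a2, a3, a4, a5, a6) i.
     if i = 1 then a1 else if i = 2 then a2 else if i = 3 then a3 else if i = 4 then a4
     else if i = 5 then a5 else if i = 6 then a6 else 0)"

lemma of_coeffs6_coeffs:
  assumes "b \<in> LambdaE6"
  shows "of_coeffs6 (b 1, b 2, b 3, b 4, b 5, b 6) = b"
proof
  fix i
  show "of_coeffs6 (b 1, b 2, b 3, b 4, b 5, b 6) i = b i"
  proof (cases "i \<in> {1..6}")
    case True
    then have "i \<in> {1, 2, 3, 4, 5, 6}" by auto
    then show ?thesis by (auto simp: of_coeffs6_def)
  next
    case False
    then show ?thesis using assms by (auto simp: of_coeffs6_def LambdaE6_def)
  qed
qed

lemma Delta6_pos_eq: "Delta6_pos = of_coeffs6 ` Delta6_pos_coeffs"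
proof
  show "Delta6_pos \<subseteq> of_coeffs6 ` Delta6_pos_coeffs"
  proof
    fix b assume "b \<in> Delta6_pos"
    then have "b \<in> LambdaE6" "formE6 b b = 2" "\<forall>i. 0 \<le> b i" "b 6 \<noteq> 0"
      unfolding Delta6_pos_def pos_rootsE6_def rootsE6_def by auto
    then have "(b 1, b 2, b 3, b 4, b 5, b 6) \<in> Delta6_pos_coeffs"
      by (simp add: mem_Delta6_pos_coeffs_iff formE6_self order.not_eq_order_implies_strict)
    with \<open>b \<in> LambdaE6\<close> show "b \<in> of_coeffs6 ` Delta6_pos_coeffs"
      by (metis image_eqI of_coeffs6_coeffs)
  qed
next
  show "of_coeffs6 ` Delta6_pos_coeffs \<subseteq> Delta6_pos"
  proof clarify
    fix a1 a2 a3 a4 a5 a6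
    assume "(a1, a2, a3, a4, a5, a6) \<in> Delta6_pos_coeffs"
    then have "normE6 a1 a2 a3 a4 a5 a6 = 2 \<and> 0 \<le> a1 \<and> 0 \<le> a2 \<and> 0 \<le> a3 \<and> 0 \<le> a4
        \<and> 0 \<le> a5 \<and> 0 < a6"
      by (rule mem_Delta6_pos_coeffs_iff[THEN iffD1])
    then show "of_coeffs6 (a1, a2, a3, a4, a5, a6) \<in> Delta6_pos"
      unfolding Delta6_pos_def pos_rootsE6_def rootsE6_def LambdaE6_def
      by (simp add: formE6_self of_coeffs6_def)
  qed
qed

definition coords5 :: "(nat \<Rightarrow> 3) \<Rightarrow> 3 \<times> 3 \<times> 3 \<times> 3 \<times> 3" where
  "coords5 x = (x 1, x 2, x 3, x 4, x 5)"

lemma inj_on_coords5: "inj_on coords5 V5"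
proof
  fix x y assume xy: "x \<in> V5" "y \<in> V5" "coords5 x = coords5 y"
  show "x = y"
  proof
    fix k
    show "x k = y k"
    proof (cases "k \<in> {1..5}")
      case True
      then have "k = 1 \<or> k = 2 \<or> k = 3 \<or> k = 4 \<or> k = 5" by auto
      then show ?thesis using xy(3) unfolding coords5_def by auto
    next
      case False
      then show ?thesis using xy(1,2) unfolding V5_def by auto
    qed
  qed
qed

lemma fE6_in_V5: "fE6 b \<in> V5"
  unfolding V5_def fE6_def by (auto intro!: sum.neutral simp: f_alpha_def vec5_def)

lemma coords5_fE6:
  "coords5 (fE6 b) =
     (of_int (b 1 + b 6), of_int (2 * b 1 + b 3 + b 6), of_int (2 * b 3 + b 4 + b 6),
      of_int (b 2 + 2 * b 4 + b 5 + b 6), of_int (2 * b 2 + b 5 + b 6))"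
proof -
  have "{1..6::nat} = {1, 2, 3, 4, 5, 6}" by auto
  then show ?thesis
    unfolding coords5_def fE6_def f_alpha_def vec5_def by (simp add: algebra_simps)
qed

lemma coords5_Gamma6_pos:
  "coords5 ` Gamma6_pos = {(y1, y2, y3, y4, y5). y1 * y2 * y3 * y4 * y5 = 1}"
proof -
  have "coords5 ` Gamma6_pos = (\<lambda>r. coords5 (fE6 (of_coeffs6 r))) ` Delta6_pos_coeffs"
    by (simp add: Gamma6_pos_def Delta6_pos_eq image_image)
  also have "\<dots> =
    {(1, 1, 1, 1, 1), (1, 1, 1, 2, 2), (1, 1, 2, 1, 2), (1, 2, 1, 1, 2),
     (1, 1, 2, 2, 1), (1, 2, 1, 2, 1), (1, 2, 2, 1, 1), (1, 2, 2, 2, 2),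
     (2, 1, 1, 1, 2), (2, 1, 1, 2, 1), (2, 1, 2, 1, 1), (2, 1, 2, 2, 2),
     (2, 2, 1, 1, 1), (2, 2, 1, 2, 2), (2, 2, 2, 1, 2), (2, 2, 2, 2, 1)}"
    by (simp add: Delta6_pos_coeffs_def coords5_fE6 of_coeffs6_def, simp add: numeral_Z3_eq_mod)
  also have "\<dots> = {(y1, y2, y3, y4, y5). y1 * y2 * y3 * y4 * y5 = 1}" (is "?E = _")
  proof -
    have "(y1, y2, y3, y4, y5) \<in> ?E \<longleftrightarrow> y1 * y2 * y3 * y4 * y5 = 1" for y1 y2 y3 y4 y5 :: 3
      using Z3_cases[of y1] Z3_cases[of y2] Z3_cases[of y3] Z3_cases[of y4] Z3_cases[of y5]
      by (elim disjE; simp)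
    then show ?thesis
      by (simp only: set_eq_iff split_paired_All mem_Collect_eq prod.case simp_thms)
  qed
  finally show ?thesis .
qed

theorem mainTheorem15:
  shows "Gamma6_pos = {x \<in> V5. (\<Prod>i\<in>{1..5}. x i) = 1}
       \<and> Gamma6_pos = {x \<in> V5. (\<forall>i\<in>{1..5}. x i \<noteq> 0) \<and> even (card {i\<in>{1..5}. x i = 2})}"
proof -
  have V5: "Gamma6_pos \<subseteq> V5"
    unfolding Gamma6_pos_def using fE6_in_V5 by auto
  have prod5: "(\<Prod>i\<in>{1..5}. x i) = x 1 * x 2 * x 3 * x 4 * x 5" for x :: "nat \<Rightarrow> 3"
  proof -
    have "{1..5::nat} = {1, 2, 3, 4, 5}" by auto
    then show ?thesis by (simp add: mult.assoc)
  qed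
  have "x \<in> Gamma6_pos \<longleftrightarrow> x \<in> V5 \<and> (\<Prod>i\<in>{1..5}. x i) = 1" for x
  proof -
    have "x \<in> Gamma6_pos \<longleftrightarrow> x \<in> V5 \<and> coords5 x \<in> coords5 ` Gamma6_pos"
      using inj_on_image_mem_iff[OF inj_on_coords5 _ V5] V5 by blast
    also have "\<dots> \<longleftrightarrow> x \<in> V5 \<and> (\<Prod>i\<in>{1..5}. x i) = 1"
      by (simp only: coords5_Gamma6_pos coords5_def prod5 mem_Collect_eq prod.case)
    finally show ?thesis .
  qed
  then have "Gamma6_pos = {x \<in> V5. (\<Prod>i\<in>{1..5}. x i) = 1}"
    by blast
  then show ?thesis
    using prod_Z3_eq_one_iff[of "{1..5::nat}"] by auto
qed

end
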